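(* Let $p$ be an odd prime and let $a$ be an integer with $a\not\equiv \pm 1 \pmod p$. Put $\epsilon=\left(\frac{a^2-1}{p}\right)$ and $\delta=\left(\frac{2(a+1)}{p}\right)$ (Legendre symbols; both lie in $\{\pm1\}$ under this hypothesis), and let $\omega_a=a+\sqrt{a^2-1}$. Then, in the ring $\mathbb{Z}[\sqrt{a^2-1}]$ (i.e. $\mathbb{Z}[X]/(X^2-(a^2-1))$) reduced modulo $p$, $$\omega_a^{\frac{p-\epsilon}{2}}\equiv \delta,\qquad \omega_a^{\frac{p+\epsilon}{2}}\equiv \delta\,\omega_a^{\epsilon}\pmod p,$$ equivalently $$T_{(p-\epsilon)/2}(a)\equiv\delta,\quad U_{(p-\epsilon)/2-1}(a)\equiv 0,\quad T_{(p+\epsilon)/2}(a)\equiv\delta a,\quad U_{(p+\epsilon)/2-1}(a)\equiv\delta\epsilon \pmod p.$$ Moreover $T_{(p-\epsilon)/2}(a)\equiv\delta \pmod{p^2}$, and $T_{(p-\epsilon)/2}(a)\equiv\delta \pmod p$ by itself implies $U_{(p-\epsilon)/2-1}(a)\equiv 0\pmod p$.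
   Context: The Chebyshev polynomials $T_n(x)$ (first kind) and $U_{n}(x)$ (second kind) are the integer polynomials determined by $(x+\sqrt{x^2-1})^n=T_n(x)+U_{n-1}(x)\sqrt{x^2-1}$ for $n\ge 0$ (so $T_0=1$, $U_{-1}=0$, $T_1=x$, $U_0=1$, and $T_n(\cos\theta)=\cos n\theta$). For an element $u+v\sqrt{a^2-1}$ with $u,v\in\mathbb{Z}$, congruence modulo $p$ means $u$ and $v$ are each congruent modulo $p$; $\omega_a^{-1}=a-\sqrt{a^2-1}$. *)

theory Defs
  imports "HOL-Number_Theory.Number_Theory"
begin

text \<open>Coefficients of powers of omega_a = a + sqrt(a^2-1) in Z[sqrt(a^2-1)]:
  omega_pow a n = (u, v) means omega_a^n = u + v sqrt(a^2-1).
  By definition of the Chebyshev polynomials, omega_pow a n = (T_n(a), U_{n-1}(a)).\<close>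
fun omega_pow :: "int \<Rightarrow> nat \<Rightarrow> int \<times> int" where
  "omega_pow a 0 = (1, 0)"
| "omega_pow a (Suc n) =
     (let (u, v) = omega_pow a n in (a * u + (a\<^sup>2 - 1) * v, u + a * v))"

definition chebT :: "nat \<Rightarrow> int \<Rightarrow> int" where
  "chebT n a = fst (omega_pow a n)"

definition chebU :: "nat \<Rightarrow> int \<Rightarrow> int" where
  "chebU n a = snd (omega_pow a (Suc n))"

definition cong_pair :: "int \<times> int \<Rightarrow> int \<times> int \<Rightarrow> int \<Rightarrow> bool" where
  "cong_pair x y m \<longleftrightarrow> [fst x = fst y] (mod m) \<and> [snd x = snd y] (mod m)"

end

theory Submission
  imports Defs
begin

(* Let d = a^2 - 1 and beta = (a + 1) + sqrt d, so that beta^2 = 2(a + 1) omega_a and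
   beta * conj beta = 2(a + 1). The binomial theorem, Fermat's little theorem and Euler's
   criterion give beta^p == (a + 1) + eps sqrt d (mod p), i.e. beta^p == beta or conj beta
   according as eps = 1 or eps = -1; in both cases beta^(p - eps) == (2(a + 1))^((1 - eps)/2).
   As beta^(p - eps) = (2(a + 1))^((p - eps)/2) omega_a^((p - eps)/2) and
   (2(a + 1))^((p - 1)/2) == delta by Euler's criterion, omega_a^((p - eps)/2) == delta, and
   multiplying by omega_a^eps = a + eps sqrt d gives the second congruence. Their coordinates
   are the claims on T and U. The lift to p^2 and the implication T == delta ==> U == 0 follow
   from the Pell equation T_n^2 - d U_(n-1)^2 = 1. *)

(* An element x stands for the family of elements re x d + im x d * sqrt d of Z[sqrt d], one for
   every d, with componentwise operations: a single comm_ring_1 type covering all d at once. *)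
datatype zsqrt = ZSqrt (re: "int \<Rightarrow> int") (im: "int \<Rightarrow> int")

lemma zsqrt_eqI: "(\<And>d. re x d = re y d) \<Longrightarrow> (\<And>d. im x d = im y d) \<Longrightarrow> x = y"
  by (cases x; cases y) (auto simp: fun_eq_iff)

instantiation zsqrt :: comm_ring_1
begin
definition "0 = ZSqrt (\<lambda>_. 0) (\<lambda>_. 0)"
definition "1 = ZSqrt (\<lambda>_. 1) (\<lambda>_. 0)"
definition "x + y = ZSqrt (\<lambda>d. re x d + re y d) (\<lambda>d. im x d + im y d)"
definition "x - y = ZSqrt (\<lambda>d. re x d - re y d) (\<lambda>d. im x d - im y d)"
definition "- x = ZSqrt (\<lambda>d. - re x d) (\<lambda>d. - im x d)"
definition "x * y = ZSqrt (\<lambda>d. re x d * re y d + d * im x d * im y d)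
                          (\<lambda>d. re x d * im y d + im x d * re y d)"
instance
  by standard (auto intro!: zsqrt_eqI simp: zero_zsqrt_def one_zsqrt_def plus_zsqrt_def
      minus_zsqrt_def uminus_zsqrt_def times_zsqrt_def algebra_simps fun_eq_iff)
end

lemma zsqrt_components [simp]:
  "re 0 d = 0" "im 0 d = 0" "re 1 d = 1" "im 1 d = 0"
  "re (x + y) d = re x d + re y d" "im (x + y) d = im x d + im y d"
  "re (x - y) d = re x d - re y d" "im (x - y) d = im x d - im y d"
  "re (- x) d = - re x d" "im (- x) d = - im x d"
  "re (x * y) d = re x d * re y d + d * im x d * im y d"
  "im (x * y) d = re x d * im y d + im x d * re y d"
  by (simp_all add: zero_zsqrt_def one_zsqrt_def plus_zsqrt_def minus_zsqrt_def
      uminus_zsqrt_def times_zsqrt_def)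

lemma zsqrt_of_nat [simp]: "re (of_nat n) d = int n" "im (of_nat n) d = 0"
  by (induction n) auto

lemma zsqrt_of_int [simp]: "re (of_int k) d = k" "im (of_int k) d = 0"
  by (cases k rule: int_cases; simp)+

lemma zsqrt_numeral [simp]: "re (numeral k) d = numeral k" "im (numeral k) d = 0"
  using zsqrt_of_nat[of "numeral k" d] by simp_all

lemma zsqrt_of_int_power [simp]: "re (of_int k ^ n) d = k ^ n" "im (of_int k ^ n) d = 0"
  by (simp_all flip: of_int_power)

definition sqrtd :: zsqrt where
  "sqrtd = ZSqrt (\<lambda>_. 0) (\<lambda>_. 1)"

lemma sqrtd_components [simp]: "re sqrtd d = 0" "im sqrtd d = 1"
  by (simp_all add: sqrtd_def)

lemma sqrtd_even_power: "sqrtd ^ (2 * h) = ZSqrt (\<lambda>d. d ^ h) (\<lambda>_. 0)"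
  by (induction h) (auto intro!: zsqrt_eqI simp: one_zsqrt_def)

(* Modulus 0 expresses equality in Z[sqrt d]. *)
definition zsqrt_cong :: "int \<Rightarrow> int \<Rightarrow> zsqrt \<Rightarrow> zsqrt \<Rightarrow> bool" where
  "zsqrt_cong d m x y \<longleftrightarrow> [re x d = re y d] (mod m) \<and> [im x d = im y d] (mod m)"

lemma zsqrt_cong_refl [simp]: "zsqrt_cong d m x x"
  by (simp add: zsqrt_cong_def)

lemma zsqrt_cong_sym: "zsqrt_cong d m x y \<Longrightarrow> zsqrt_cong d m y x"
  by (auto simp: zsqrt_cong_def cong_sym)

lemma zsqrt_cong_trans [trans]:
  "zsqrt_cong d m x y \<Longrightarrow> zsqrt_cong d m y z \<Longrightarrow> zsqrt_cong d m x z"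
  by (auto simp: zsqrt_cong_def intro: cong_trans)

lemma zsqrt_cong_mult:
  "zsqrt_cong d m x y \<Longrightarrow> zsqrt_cong d m x' y' \<Longrightarrow> zsqrt_cong d m (x * x') (y * y')"
  by (auto simp: zsqrt_cong_def intro!: cong_add cong_mult cong_scalar_left)

lemma zsqrt_cong_mult_left: "zsqrt_cong d m x y \<Longrightarrow> zsqrt_cong d m (z * x) (z * y)"
  by (simp add: zsqrt_cong_mult)

lemma zsqrt_cong_mult_right: "zsqrt_cong d m x y \<Longrightarrow> zsqrt_cong d m (x * z) (y * z)"
  by (simp add: zsqrt_cong_mult)

lemma zsqrt_cong_power: "zsqrt_cong d m x y \<Longrightarrow> zsqrt_cong d m (x ^ n) (y ^ n)"
  by (induction n) (auto intro: zsqrt_cong_mult)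

lemma zsqrt_cong_0_imp: "zsqrt_cong d 0 x y \<Longrightarrow> zsqrt_cong d m x y"
  by (simp add: zsqrt_cong_def)

lemma zsqrt_cong_of_int: "[k = l] (mod m) \<Longrightarrow> zsqrt_cong d m (of_int k) (of_int l)"
  by (simp add: zsqrt_cong_def)

lemma zsqrt_cong_of_int_mult_cancel:
  "coprime k m \<Longrightarrow> zsqrt_cong d m (of_int k * x) (of_int k * y) \<Longrightarrow> zsqrt_cong d m x y"
  by (simp add: zsqrt_cong_def cong_mult_lcancel)

lemma zsqrt_cong_sign_mult_eq_1:
  assumes "s \<in> {1, -1}" and "zsqrt_cong d m (of_int s * x) 1"
  shows "zsqrt_cong d m x (of_int s)"
proof -
  have "x = of_int s * (of_int s * x)"
    using assms(1) by (auto simp: mult.assoc[symmetric])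
  also have "zsqrt_cong d m \<dots> (of_int s * 1)"
    by (rule zsqrt_cong_mult_left[OF assms(2)])
  finally show ?thesis by simp
qed

(* The library's freshmans_dream needs a ring of characteristic p; here the multiple of p is kept. *)
lemma freshmans_dream_remainder:
  fixes x y :: "'a::comm_ring_1"
  assumes "prime p"
  shows "\<exists>z. (x + y) ^ p = x ^ p + y ^ p + of_nat p * z"
proof -
  define z where "z = (\<Sum>k\<in>{1..<p}. of_nat ((p choose k) div p) * x ^ k * y ^ (p - k) :: 'a)"
  have p: "0 < p" using assms prime_gt_0_nat by blast
  have "(x + y) ^ p = (\<Sum>k\<le>p. of_nat (p choose k) * x ^ k * y ^ (p - k))"
    by (rule binomial_ring)
  also have "{..p} = insert 0 (insert p {1..<p})"
    using p by auto
  also have "(\<Sum>k\<in>\<dots>. of_nat (p choose k) * x ^ k * y ^ (p - k)) =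
      y ^ p + x ^ p + (\<Sum>k\<in>{1..<p}. of_nat (p choose k) * x ^ k * y ^ (p - k))"
    using p by simp
  also have "(\<Sum>k\<in>{1..<p}. of_nat (p choose k) * x ^ k * y ^ (p - k)) = of_nat p * z"
    unfolding z_def sum_distrib_left
  proof (intro sum.cong refl)
    fix k assume "k \<in> {1..<p}"
    then have "p dvd (p choose k)" using assms by (intro dvd_choose_prime) auto
    then show "of_nat (p choose k) * x ^ k * y ^ (p - k) =
        of_nat p * (of_nat ((p choose k) div p) * x ^ k * y ^ (p - k))"
      by (simp flip: of_nat_mult mult.assoc)
  qed
  finally show ?thesis by (auto simp: algebra_simps)
qed

lemma fermat_little_int:
  fixes c :: int
  assumes "prime P"
  shows "[c ^ P = c] (mod int P)"
proof -
  define n where "n = nat (c mod int P)"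
  have c: "[c = int n] (mod int P)"
    using prime_gt_0_nat[OF assms] by (simp add: n_def cong_def)
  have "[n ^ P = n] (mod P)"
  proof (cases "P dvd n")
    case True
    then have "[n = 0] (mod P)"
      by (simp add: cong_0_iff)
    moreover from this have "[n ^ P = 0 ^ P] (mod P)"
      by (rule cong_pow)
    ultimately show ?thesis
      using prime_gt_0_nat[OF assms] by (metis cong_sym cong_trans zero_power)
  next
    case False
    have "n ^ P = n * n ^ (P - 1)"
      using prime_gt_0_nat[OF assms] by (simp flip: power_Suc)
    also have "[\<dots> = n * 1] (mod P)"
      by (intro cong_mult cong_refl fermat_theorem assms False)
    finally show ?thesis by simp
  qed
  then have "[int n ^ P = int n] (mod int P)"
    by (simp flip: cong_int_iff)
  then show ?thesis
    using c by (meson cong_pow cong_sym cong_trans)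
qed

lemma Legendre_unit: "\<not> p dvd x \<Longrightarrow> Legendre x p \<in> {1, -1}"
  by (auto simp: Legendre_def cong_0_iff)

lemma zsqrt_cong_frobenius:
  assumes "prime P" and "P = 2 * h + 1"
  shows "zsqrt_cong d (int P) ((of_int c + sqrtd) ^ P) (of_int (c ^ P) + of_int (d ^ h) * sqrtd)"
proof -
  obtain z where z: "(of_int c + sqrtd) ^ P = of_int c ^ P + sqrtd ^ P + of_nat P * z"
    using freshmans_dream_remainder[OF assms(1)] by blast
  have "sqrtd ^ P = sqrtd ^ (2 * h) * sqrtd"
    by (simp add: assms(2))
  then have "re ((of_int c + sqrtd) ^ P) d = c ^ P + int P * re z d"
    and "im ((of_int c + sqrtd) ^ P) d = d ^ h + int P * im z d"
    unfolding z by (simp_all add: sqrtd_even_power)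
  then show ?thesis
    by (simp add: zsqrt_cong_def cong_add_lcancel_0 cong_mult_self_left)
qed

lemma zsqrt_cong_frobenius_Legendre:
  assumes "prime P" and "2 < P"
  shows "zsqrt_cong d (int P) ((of_int c + sqrtd) ^ P) (of_int c + of_int (Legendre d (int P)) * sqrtd)"
proof -
  have "odd P"
    using assms by (rule prime_odd_nat)
  then have P: "P = 2 * ((P - 1) div 2) + 1"
    by presburger
  note zsqrt_cong_frobenius[OF assms(1) P, of d c]
  also have "zsqrt_cong d (int P) (of_int (c ^ P) + of_int (d ^ ((P - 1) div 2)) * sqrtd)
      (of_int c + of_int (Legendre d (int P)) * sqrtd)"
    using fermat_little_int[OF assms(1)] euler_criterion[OF assms]
    by (simp add: zsqrt_cong_def cong_sym)
  finally show ?thesis .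
qed

lemma zsqrt_norm: "zsqrt_cong d 0 ((of_int x + sqrtd) * (of_int x - sqrtd)) (of_int (x\<^sup>2 - d))"
  by (simp add: zsqrt_cong_def power2_eq_square)

lemma zsqrt_square_succ:
  "zsqrt_cong (a\<^sup>2 - 1) 0 ((of_int (a + 1) + sqrtd) ^ 2) (of_int (2 * (a + 1)) * (of_int a + sqrtd))"
  by (simp add: zsqrt_cong_def power2_eq_square algebra_simps)

lemma omega_power_half_scaled_cong:
  fixes a :: int and P n :: nat
  defines "d \<equiv> a\<^sup>2 - 1" and "c \<equiv> a + 1" and "\<epsilon> \<equiv> Legendre (a\<^sup>2 - 1) (int P)"
  assumes P: "prime P" "2 < P" and \<epsilon>: "\<epsilon> \<in> {1, -1}" and n: "2 * int n = int P - \<epsilon>"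
  shows "zsqrt_cong d (int P) (of_int ((2 * c) ^ Suc ((P - 1) div 2)) * (of_int a + sqrtd) ^ n)
    (of_int (2 * c))"
proof -
  define h where "h = (P - 1) div 2"
  define \<omega> where "\<omega> = of_int a + sqrtd"
  define \<beta> where "\<beta> = of_int c + sqrtd"
  define \<beta>' where "\<beta>' = of_int c - sqrtd"
  have "odd P"
    using P by (rule prime_odd_nat)
  then have P_h: "P = 2 * h + 1"
    unfolding h_def by presburger
  have frobenius: "zsqrt_cong d (int P) (\<beta> ^ P) (of_int c + of_int \<epsilon> * sqrtd)"
    unfolding \<beta>_def \<epsilon>_def d_def using P by (rule zsqrt_cong_frobenius_Legendre)
  have "c\<^sup>2 - d = 2 * c"
    by (simp add: c_def d_def power2_eq_square algebra_simps)
  then have norm: "zsqrt_cong d (int P) (\<beta> * \<beta>') (of_int (2 * c))"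
    using zsqrt_cong_0_imp[OF zsqrt_norm[of d c]] unfolding \<beta>_def \<beta>'_def by simp
  have even_power: "zsqrt_cong d (int P) (\<beta> ^ (2 * k)) ((of_int (2 * c) * \<omega>) ^ k)" for k
    unfolding power_mult \<beta>_def \<omega>_def c_def d_def
    by (rule zsqrt_cong_power[OF zsqrt_cong_0_imp[OF zsqrt_square_succ]])
  show ?thesis
  proof (cases "\<epsilon> = 1")
    case True
    then have "n = h" using n P_h by simp
    then have "of_int ((2 * c) ^ Suc h) * \<omega> ^ n = (of_int (2 * c) * \<omega>) ^ h * of_int (2 * c)"
      by (simp add: power_mult_distrib)
    also have "zsqrt_cong d (int P) \<dots> (\<beta> ^ (2 * h) * (\<beta> * \<beta>'))"
      by (intro zsqrt_cong_mult zsqrt_cong_sym[OF even_power] zsqrt_cong_sym[OF norm])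
    also have "\<beta> ^ (2 * h) * (\<beta> * \<beta>') = \<beta> ^ P * \<beta>'"
      by (simp add: P_h mult.assoc)
    also have "zsqrt_cong d (int P) \<dots> (\<beta> * \<beta>')"
      using zsqrt_cong_mult_right[OF frobenius] True by (simp add: \<beta>_def)
    finally show ?thesis
      using norm unfolding h_def \<omega>_def by (rule zsqrt_cong_trans)
  next
    case False
    then have "\<epsilon> = -1" "n = h + 1" using \<epsilon> n P_h by auto
    then have "of_int ((2 * c) ^ Suc h) * \<omega> ^ n = (of_int (2 * c) * \<omega>) ^ (h + 1)"
      by (simp add: power_mult_distrib)
    also have "zsqrt_cong d (int P) \<dots> (\<beta> ^ (2 * (h + 1)))"
      by (rule zsqrt_cong_sym[OF even_power])
    also have "\<beta> ^ (2 * (h + 1)) = \<beta> ^ P * \<beta>"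
      by (simp add: P_h)
    also have "zsqrt_cong d (int P) \<dots> (\<beta>' * \<beta>)"
      using zsqrt_cong_mult_right[OF frobenius] \<open>\<epsilon> = -1\<close> by (simp add: \<beta>'_def)
    finally show ?thesis
      using norm unfolding h_def \<omega>_def by (simp add: mult.commute zsqrt_cong_trans)
  qed
qed

lemma omega_power_half_cong:
  fixes a :: int and P n :: nat
  defines "d \<equiv> a\<^sup>2 - 1"
    and "\<epsilon> \<equiv> Legendre (a\<^sup>2 - 1) (int P)" and "\<delta> \<equiv> Legendre (2 * (a + 1)) (int P)"
  assumes P: "prime P" "2 < P" and nd: "\<not> int P dvd d" "\<not> int P dvd 2 * (a + 1)"
    and n: "2 * int n = int P - \<epsilon>"
  shows "zsqrt_cong d (int P) ((of_int a + sqrtd) ^ n) (of_int \<delta>)"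
proof -
  define c where "c = a + 1"
  define h where "h = (P - 1) div 2"
  define \<omega> where "\<omega> = of_int a + sqrtd"
  have \<epsilon>: "\<epsilon> \<in> {1, -1}" and \<delta>: "\<delta> \<in> {1, -1}"
    using nd Legendre_unit unfolding \<epsilon>_def \<delta>_def d_def by blast+
  have "coprime (2 * c) (int P)"
    using nd(2) P(1) unfolding c_def by (simp add: prime_imp_coprime coprime_commute)
  moreover have "zsqrt_cong d (int P) (of_int (2 * c) * (of_int ((2 * c) ^ h) * \<omega> ^ n)) (of_int (2 * c) * 1)"
    using omega_power_half_scaled_cong[OF P \<epsilon>[unfolded \<epsilon>_def] n[unfolded \<epsilon>_def]]
    unfolding c_def h_def \<omega>_def d_def by (simp add: mult.assoc)
  ultimately have "zsqrt_cong d (int P) (of_int ((2 * c) ^ h) * \<omega> ^ n) 1"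
    by (rule zsqrt_cong_of_int_mult_cancel)
  moreover have "[\<delta> = (2 * c) ^ h] (mod int P)"
    using euler_criterion[OF P, of "2 * c"] unfolding \<delta>_def h_def c_def .
  ultimately have "zsqrt_cong d (int P) (of_int \<delta> * \<omega> ^ n) 1"
    by (meson zsqrt_cong_trans zsqrt_cong_mult_right zsqrt_cong_of_int)
  then show ?thesis
    unfolding \<omega>_def by (rule zsqrt_cong_sign_mult_eq_1[OF \<delta>])
qed

lemma omega_power_half_succ_cong:
  fixes a :: int and P n :: nat
  defines "d \<equiv> a\<^sup>2 - 1"
    and "\<epsilon> \<equiv> Legendre (a\<^sup>2 - 1) (int P)" and "\<delta> \<equiv> Legendre (2 * (a + 1)) (int P)"
  assumes P: "prime P" "2 < P" and nd: "\<not> int P dvd d" "\<not> int P dvd 2 * (a + 1)"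
    and n: "2 * int n = int P + \<epsilon>"
  shows "zsqrt_cong d (int P) ((of_int a + sqrtd) ^ n) (of_int (\<delta> * a) + of_int (\<delta> * \<epsilon>) * sqrtd)"
proof -
  define \<omega> where "\<omega> = of_int a + sqrtd"
  define \<omega>' where "\<omega>' = of_int a - sqrtd"
  have \<epsilon>: "\<epsilon> \<in> {1, -1}"
    using nd(1) Legendre_unit unfolding \<epsilon>_def d_def by blast
  note half_cong = omega_power_half_cong[OF P nd[unfolded d_def], folded d_def \<epsilon>_def \<delta>_def \<omega>_def]
  show ?thesis
  proof (cases "\<epsilon> = 1")
    case True
    then have "2 * int (n - 1) = int P - \<epsilon>" using n by auto
    then have "zsqrt_cong d (int P) (\<omega> ^ (n - 1) * \<omega>) (of_int \<delta> * \<omega>)"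
      by (rule zsqrt_cong_mult_right[OF half_cong])
    moreover have "\<omega> ^ (n - 1) * \<omega> = \<omega> ^ n"
      using n True P(2) by (intro power_minus_mult) linarith
    ultimately show ?thesis
      using True by (simp add: \<omega>_def algebra_simps)
  next
    case False
    then have "\<epsilon> = -1" and "2 * int (n + 1) = int P - \<epsilon>" using \<epsilon> n by auto
    have "a\<^sup>2 - d = 1"
      by (simp add: d_def)
    then have "zsqrt_cong d 0 (\<omega> * \<omega>') 1"
      using zsqrt_norm[of d a] unfolding \<omega>_def \<omega>'_def by simp
    then have "zsqrt_cong d (int P) (\<omega> ^ n * 1) (\<omega> ^ n * (\<omega> * \<omega>'))"
      by (rule zsqrt_cong_mult_left[OF zsqrt_cong_0_imp[OF zsqrt_cong_sym]])
    also have "\<omega> ^ n * (\<omega> * \<omega>') = \<omega> ^ (n + 1) * \<omega>'"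
      by (simp add: mult.assoc)
    also have "zsqrt_cong d (int P) \<dots> (of_int \<delta> * \<omega>')"
      by (rule zsqrt_cong_mult_right[OF half_cong]) fact
    finally show ?thesis
      using \<open>\<epsilon> = -1\<close> by (simp add: \<omega>_def \<omega>'_def algebra_simps)
  qed
qed

lemma omega_pow_eq_zsqrt_power:
  "omega_pow a n = (re ((of_int a + sqrtd) ^ n) (a\<^sup>2 - 1), im ((of_int a + sqrtd) ^ n) (a\<^sup>2 - 1))"
  by (induction n) (auto simp: algebra_simps)

lemma cong_pair_omega_pow_iff:
  "cong_pair (omega_pow a n) (u, v) m \<longleftrightarrow>
     zsqrt_cong (a\<^sup>2 - 1) m ((of_int a + sqrtd) ^ n) (of_int u + of_int v * sqrtd)"
  by (simp add: cong_pair_def zsqrt_cong_def omega_pow_eq_zsqrt_power)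

lemma omega_pow_eq_Chebyshev: "0 < n \<Longrightarrow> omega_pow a n = (chebT n a, chebU (n - 1) a)"
  by (cases n) (simp_all add: chebT_def chebU_def)

lemma omega_pow_Pell: "fst (omega_pow a n) ^ 2 - (a\<^sup>2 - 1) * snd (omega_pow a n) ^ 2 = 1"
proof (induction n)
  case (Suc n)
  obtain u v where "omega_pow a n = (u, v)"
    by fastforce
  with Suc show ?case
    by (simp add: power2_eq_square algebra_simps)
qed simp

lemma Pell_cong_sign_imp_cong_0:
  fixes p d T U s :: int
  assumes "prime p" and "\<not> p dvd d" and Pell: "T\<^sup>2 - d * U\<^sup>2 = 1"
    and s: "s \<in> {1, -1}" and T: "[T = s] (mod p)"
  shows "[U = 0] (mod p)"
proof -
  have "[T\<^sup>2 = s\<^sup>2] (mod p)"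
    using T by (rule cong_pow)
  then have "p dvd d * U\<^sup>2"
    using Pell s by (auto simp: cong_iff_dvd_diff algebra_simps)
  then have "p dvd U"
    using assms(1,2) by (auto simp: prime_dvd_mult_iff dest: prime_dvd_power)
  then show ?thesis
    by (simp add: cong_0_iff)
qed

lemma Pell_cong_sign_lift:
  fixes p d T U s :: int
  assumes p: "prime p" "odd p" and "\<not> p dvd d" and Pell: "T\<^sup>2 - d * U\<^sup>2 = 1"
    and s: "s \<in> {1, -1}" and T: "[T = s] (mod p)"
  shows "[T = s] (mod p\<^sup>2)"
proof -
  have "p dvd U"
    using Pell_cong_sign_imp_cong_0[OF p(1) assms(3) Pell s T] by (simp add: cong_0_iff)
  then have "p\<^sup>2 dvd d * U\<^sup>2"
    by simp
  also have "d * U\<^sup>2 = (T - s) * (T + s)"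
    using Pell s by (auto simp: power2_eq_square algebra_simps)
  finally have "p\<^sup>2 dvd (T - s) * (T + s)" .
  moreover have "\<not> p dvd T + s"
  proof
    assume "p dvd T + s"
    moreover have "p dvd T - s"
      using T by (simp add: cong_iff_dvd_diff)
    ultimately have "p dvd (T + s) - (T - s)"
      by (rule dvd_diff)
    then have "p dvd 2"
      using s by auto
    then show False
      using p by (metis prime_ge_2_int zdvd_imp_le zero_less_numeral even_numeral antisym)
  qed
  then have "coprime (p\<^sup>2) (T + s)"
    using p(1) by (simp add: prime_imp_coprime)
  ultimately have "p\<^sup>2 dvd T - s"
    by (simp add: coprime_dvd_mult_left_iff)
  then show ?thesis
    by (simp add: cong_iff_dvd_diff)
qed

lemma prime_not_dvd_of_not_cong_pm1:
  fixes p a :: int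
  assumes "prime p" and "odd p" and "\<not> [a = 1] (mod p)" and "\<not> [a = -1] (mod p)"
  shows "\<not> p dvd a\<^sup>2 - 1" and "\<not> p dvd 2 * (a + 1)"
proof -
  have "\<not> p dvd a - 1" "\<not> p dvd a + 1" "\<not> p dvd 2"
    using assms prime_ge_2_int[OF assms(1)] by (auto simp: cong_iff_dvd_diff dest: zdvd_imp_le)
  moreover have "a\<^sup>2 - 1 = (a - 1) * (a + 1)"
    by (simp add: power2_eq_square algebra_simps)
  ultimately show "\<not> p dvd a\<^sup>2 - 1" "\<not> p dvd 2 * (a + 1)"
    by (metis prime_dvd_mult_iff[OF assms(1)])+
qed

theorem theorem2p1:
  fixes p a :: int
  assumes "prime p" and "odd p"
    and "\<not> [a = 1] (mod p)" and "\<not> [a = -1] (mod p)"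
  defines "\<epsilon> \<equiv> Legendre (a\<^sup>2 - 1) p"
    and "\<delta> \<equiv> Legendre (2 * (a + 1)) p"
  shows "\<epsilon> \<in> {1, -1} \<and> \<delta> \<in> {1, -1}
    \<and> cong_pair (omega_pow a (nat ((p - \<epsilon>) div 2))) (\<delta>, 0) p
    \<and> cong_pair (omega_pow a (nat ((p + \<epsilon>) div 2)))
           (if \<epsilon> = 1 then (\<delta> * a, \<delta>) else (\<delta> * a, - \<delta>)) p
    \<and> [chebT (nat ((p - \<epsilon>) div 2)) a = \<delta>] (mod p)
    \<and> [chebU (nat ((p - \<epsilon>) div 2) - 1) a = 0] (mod p)
    \<and> [chebT (nat ((p + \<epsilon>) div 2)) a = \<delta> * a] (mod p)
    \<and> [chebU (nat ((p + \<epsilon>) div 2) - 1) a = \<delta> * \<epsilon>] (mod p)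
    \<and> [chebT (nat ((p - \<epsilon>) div 2)) a = \<delta>] (mod p\<^sup>2)
    \<and> ([chebT (nat ((p - \<epsilon>) div 2)) a = \<delta>] (mod p) \<longrightarrow>
         [chebU (nat ((p - \<epsilon>) div 2) - 1) a = 0] (mod p))"
proof -
  define P where "P = nat p"
  have "2 < p"
    using prime_ge_2_int[OF assms(1)] assms(2) by (cases "p = 2") auto
  then have p: "p = int P" and P: "prime P" "2 < P"
    using assms(1) unfolding P_def by auto
  have nd: "\<not> int P dvd a\<^sup>2 - 1" "\<not> int P dvd 2 * (a + 1)"
    using prime_not_dvd_of_not_cong_pm1[OF assms(1-4)] unfolding p .
  have \<epsilon>: "\<epsilon> \<in> {1, -1}" and \<delta>: "\<delta> \<in> {1, -1}"
    using nd Legendre_unit unfolding \<epsilon>_def \<delta>_def p by blast+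
  define n\<^sub>0 where "n\<^sub>0 = nat ((p - \<epsilon>) div 2)"
  define n\<^sub>1 where "n\<^sub>1 = nat ((p + \<epsilon>) div 2)"
  have n: "2 * int n\<^sub>0 = int P - \<epsilon>" "2 * int n\<^sub>1 = int P + \<epsilon>" "0 < n\<^sub>0" "0 < n\<^sub>1"
    using \<epsilon> assms(2) P(2) unfolding n\<^sub>0_def n\<^sub>1_def p by (auto elim!: oddE)
  have A: "cong_pair (omega_pow a n\<^sub>0) (\<delta>, 0) p"
    using omega_power_half_cong[OF P nd n(1)[unfolded \<epsilon>_def p]]
    unfolding cong_pair_omega_pow_iff \<delta>_def p by simp
  have B: "cong_pair (omega_pow a n\<^sub>1) (\<delta> * a, \<delta> * \<epsilon>) p"
    using omega_power_half_succ_cong[OF P nd n(2)[unfolded \<epsilon>_def p]]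
    unfolding cong_pair_omega_pow_iff \<delta>_def \<epsilon>_def p .
  have Pell: "chebT n\<^sub>0 a ^ 2 - (a\<^sup>2 - 1) * chebU (n\<^sub>0 - 1) a ^ 2 = 1"
    using omega_pow_Pell[of a n\<^sub>0] omega_pow_eq_Chebyshev[OF n(3)] by simp
  show ?thesis
    using \<epsilon> \<delta> A B Pell_cong_sign_lift[OF assms(1,2) nd(1)[folded p] Pell \<delta>]
      Pell_cong_sign_imp_cong_0[OF assms(1) nd(1)[folded p] Pell \<delta>]
    unfolding n\<^sub>0_def[symmetric] n\<^sub>1_def[symmetric]
    by (auto simp: cong_pair_def omega_pow_eq_Chebyshev[OF n(3)] omega_pow_eq_Chebyshev[OF n(4)])
qed

end
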